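(* A graph $G$ admits a full $C_5$-colouring if and only if $G$ has no induced subgraph isomorphic to $C_3$, to $K_1+P_4$, or to $2K_2$.
   Context: All graphs are finite, simple and loopless. $P_n$ and $C_n$ denote the path and cycle on $n$ vertices; $+$ denotes disjoint union and $2K_2$ is the disjoint union of two edges. A full $C_5$-colouring of $G$ is a map $\varphi\colon V(G)\to V(C_5)$ such that for all $x,y\in V(G)$, $xy\in E(G)$ if and only if $\varphi(x)\varphi(y)\in E(C_5)$. *)

theory Defs
  imports Main
begin

type_synonym 'a graph = "'a set \<times> ('a \<Rightarrow> 'a \<Rightarrow> bool)"

definition verts :: "'a graph \<Rightarrow> 'a set" where "verts G = fst G"
definition adj :: "'a graph \<Rightarrow> 'a \<Rightarrow> 'a \<Rightarrow> bool" where "adj G = snd G"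

definition simple_graph :: "'a graph \<Rightarrow> bool" where
  "simple_graph G \<longleftrightarrow> finite (verts G)
     \<and> (\<forall>x y. adj G x y \<longrightarrow> x \<in> verts G \<and> y \<in> verts G)
     \<and> (\<forall>x y. adj G x y \<longrightarrow> adj G y x)
     \<and> (\<forall>x. \<not> adj G x x)"

definition path_graph :: "nat \<Rightarrow> nat graph" where
  "path_graph n = ({0..<n}, \<lambda>i j. i < n \<and> j < n \<and> (j = i + 1 \<or> i = j + 1))"

definition cycle_graph :: "nat \<Rightarrow> nat graph" where
  "cycle_graph n = ({0..<n}, \<lambda>i j. i < n \<and> j < n \<and> (j = Suc i mod n \<or> i = Suc j mod n) \<and> i \<noteq> j)"

definition complete_graph :: "nat \<Rightarrow> nat graph" where
  "complete_graph n = ({0..<n}, \<lambda>i j. i < n \<and> j < n \<and> i \<noteq> j)"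

definition disj_union :: "'a graph \<Rightarrow> 'b graph \<Rightarrow> ('a + 'b) graph" where
  "disj_union G H = (verts G <+> verts H,
     \<lambda>u v. case (u, v) of (Inl x, Inl y) \<Rightarrow> adj G x y
                       | (Inr x, Inr y) \<Rightarrow> adj H x y
                       | _ \<Rightarrow> False)"

definition has_induced :: "'a graph \<Rightarrow> 'b graph \<Rightarrow> bool" where
  "has_induced G H \<longleftrightarrow> (\<exists>f. inj_on f (verts H) \<and> f ` verts H \<subseteq> verts G
      \<and> (\<forall>x\<in>verts H. \<forall>y\<in>verts H. adj G (f x) (f y) \<longleftrightarrow> adj H x y))"

definition full_C5_colouring :: "'a graph \<Rightarrow> ('a \<Rightarrow> nat) \<Rightarrow> bool" where
  "full_C5_colouring G \<phi> \<longleftrightarrow> (\<forall>x\<in>verts G. \<phi> x \<in> verts (cycle_graph 5))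
      \<and> (\<forall>x\<in>verts G. \<forall>y\<in>verts G. adj G x y \<longleftrightarrow> adj (cycle_graph 5) (\<phi> x) (\<phi> y))"

end

theory Submission
  imports Defs
begin

text \<open>A full \<open>C\<^sub>5\<close>-colouring makes the adjacency of \<open>G\<close> the pullback of that of \<open>C\<^sub>5\<close>,
and \<open>C\<^sub>5\<close> has no triangle, no \<open>2K\<^sub>2\<close>, and every induced \<open>P\<^sub>4\<close> of \<open>C\<^sub>5\<close> misses a single
vertex, which is adjacent to both of its ends; this gives necessity.

Conversely, if \<open>G\<close> contains an induced path \<open>a b c d\<close>, colour it \<open>0 1 2 3\<close>. The three
excluded subgraphs force every vertex to meet the path in one of the five sets \<open>{b}\<close>,
\<open>{a, c}\<close>, \<open>{b, d}\<close>, \<open>{c}\<close>, \<open>{a, d}\<close>, which are the traces on \<open>0 1 2 3\<close> of the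
neighbourhoods of the vertices \<open>0, \<dots>, 4\<close> of \<open>C\<^sub>5\<close>; colouring every vertex by its trace is
a full \<open>C\<^sub>5\<close>-colouring. If \<open>G\<close> has no induced \<open>P\<^sub>4\<close>, its edges form a complete
bipartite graph, which maps onto an edge of \<open>C\<^sub>5\<close>, the remaining vertices being isolated.\<close>

abbreviation C5 :: "nat \<Rightarrow> nat \<Rightarrow> bool" where "C5 \<equiv> adj (cycle_graph 5)"

definition triangle_free :: "('a \<Rightarrow> 'a \<Rightarrow> bool) \<Rightarrow> bool" where
  "triangle_free E \<longleftrightarrow> (\<forall>x y z. E x y \<longrightarrow> E y z \<longrightarrow> \<not> E x z)"

definition two_K2_free :: "('a \<Rightarrow> 'a \<Rightarrow> bool) \<Rightarrow> bool" where
  "two_K2_free E \<longleftrightarrow> (\<forall>a b c d. E a b \<longrightarrow> E c d \<longrightarrow> E a c \<or> E a d \<or> E b c \<or> E b d)"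

definition induced_P4 :: "('a \<Rightarrow> 'a \<Rightarrow> bool) \<Rightarrow> 'a \<Rightarrow> 'a \<Rightarrow> 'a \<Rightarrow> 'a \<Rightarrow> bool" where
  "induced_P4 E a b c d \<longleftrightarrow> E a b \<and> E b c \<and> E c d \<and> \<not> E a c \<and> \<not> E b d \<and> \<not> E a d"

definition K1_P4_free :: "'a set \<Rightarrow> ('a \<Rightarrow> 'a \<Rightarrow> bool) \<Rightarrow> bool" where
  "K1_P4_free V E \<longleftrightarrow>
     (\<forall>a b c d e. induced_P4 E a b c d \<longrightarrow> e \<in> V \<longrightarrow> E e a \<or> E e b \<or> E e c \<or> E e d)"

lemma verts_cycle_graph: "verts (cycle_graph n) = {0..<n}"
  by (simp add: cycle_graph_def verts_def)

lemma C5_iff_Suc_mod: "C5 i j \<longleftrightarrow> i < 5 \<and> j < 5 \<and> (j = Suc i mod 5 \<or> i = Suc j mod 5) \<and> i \<noteq> j"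
  by (simp add: adj_def cycle_graph_def)

lemma C5_iff:
  "C5 i j \<longleftrightarrow> (i = 0 \<and> j = 1) \<or> (i = 1 \<and> j = 2) \<or> (i = 2 \<and> j = 3) \<or> (i = 3 \<and> j = 4) \<or> (i = 4 \<and> j = 0)
            \<or> (i = 1 \<and> j = 0) \<or> (i = 2 \<and> j = 1) \<or> (i = 3 \<and> j = 2) \<or> (i = 4 \<and> j = 3) \<or> (i = 0 \<and> j = 4)"
  (is "_ \<longleftrightarrow> ?edge")
proof
  assume "C5 i j"
  then have "i \<in> {0, 1, 2, 3, 4}" "j \<in> {0, 1, 2, 3, 4}" "j = Suc i mod 5 \<or> i = Suc j mod 5" "i \<noteq> j"
    unfolding C5_iff_Suc_mod by auto
  then show ?edge
    by (elim insertE; simp)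
qed (auto simp: C5_iff_Suc_mod)

lemma triangle_free_C5: "triangle_free C5"
  unfolding triangle_free_def C5_iff by auto

lemma two_K2_free_C5: "two_K2_free C5"
  unfolding two_K2_free_def
  by (intro allI impI) (elim C5_iff[THEN iffD1, elim_format] disjE conjE; simp add: C5_iff)

lemma induced_P4_C5:
  assumes "induced_P4 C5 a b c d"
  shows "(a, b, c, d) \<in> {(0, 1, 2, 3), (1, 2, 3, 4), (2, 3, 4, 0), (3, 4, 0, 1), (4, 0, 1, 2),
                           (3, 2, 1, 0), (4, 3, 2, 1), (0, 4, 3, 2), (1, 0, 4, 3), (2, 1, 0, 4)}"
  using assms unfolding induced_P4_def C5_iff[of a b] by (elim disjE conjE; simp add: C5_iff)

lemma K1_P4_free_C5: "K1_P4_free {0..<5} C5"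
  unfolding K1_P4_free_def
proof (intro allI impI)
  fix a b c d e :: nat
  assume P4: "induced_P4 C5 a b c d" and "e \<in> {0..<5}"
  then have "e \<in> {0, 1, 2, 3, 4}"
    by auto
  with induced_P4_C5[OF P4] show "C5 e a \<or> C5 e b \<or> C5 e c \<or> C5 e d"
    by (elim insertE; simp add: C5_iff)
qed

lemma C5_common_neighbour:
  assumes "k < 5" "l < 5" "\<not> C5 k l" "\<not> (k = 0 \<and> l = 3)" "\<not> (k = 3 \<and> l = 0)"
  shows "\<exists>j\<in>{0, 1, 2, 3}. C5 k j \<and> C5 l j"
proof -
  have "k \<in> {0, 1, 2, 3, 4}" "l \<in> {0, 1, 2, 3, 4}"
    using assms(1,2) by auto
  then show ?thesis
    using assms(3-5) by (elim insertE; simp add: C5_iff)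
qed

lemma verts_complete_graph: "verts (complete_graph n) = {0..<n}"
  by (simp add: complete_graph_def verts_def)

lemma verts_path_graph: "verts (path_graph n) = {0..<n}"
  by (simp add: path_graph_def verts_def)

lemma verts_disj_union: "verts (disj_union G H) = verts G <+> verts H"
  by (simp add: disj_union_def verts_def)

lemma adj_cycle_graph_3: "adj (cycle_graph 3) i j \<longleftrightarrow> i < 3 \<and> j < 3 \<and> i \<noteq> j"
proof -
  have "j = Suc i mod 3 \<or> i = Suc j mod 3" if "i < 3" "j < 3" "i \<noteq> j"
  proof -
    have "i \<in> {0, 1, 2}" "j \<in> {0, 1, 2}"
      using that by auto
    then show ?thesis
      using \<open>i \<noteq> j\<close> by (elim insertE; simp)
  qed
  then show ?thesis
    by (auto simp: adj_def cycle_graph_def)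
qed

lemma adj_complete_graph: "adj (complete_graph n) i j \<longleftrightarrow> i < n \<and> j < n \<and> i \<noteq> j"
  by (simp add: adj_def complete_graph_def)

lemma adj_path_graph: "adj (path_graph n) i j \<longleftrightarrow> i < n \<and> j < n \<and> (j = i + 1 \<or> i = j + 1)"
  by (simp add: adj_def path_graph_def)

lemma adj_disj_union [simp]:
  "adj (disj_union G H) (Inl x) (Inl y) \<longleftrightarrow> adj G x y"
  "adj (disj_union G H) (Inr u) (Inr v) \<longleftrightarrow> adj H u v"
  "\<not> adj (disj_union G H) (Inl x) (Inr v)"
  "\<not> adj (disj_union G H) (Inr u) (Inl y)"
  by (simp_all add: adj_def disj_union_def)

lemma simple_graph_adj_commute: "simple_graph G \<Longrightarrow> adj G x y \<longleftrightarrow> adj G y x"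
  unfolding simple_graph_def by blast

lemma simple_graph_adjD:
  assumes "simple_graph G" "adj G x y"
  shows "x \<in> verts G" "y \<in> verts G" "x \<noteq> y"
  using assms unfolding simple_graph_def by metis+

lemma has_induced_cycle_graph_3_iff:
  fixes G :: "'a graph"
  assumes G: "simple_graph G"
  shows "has_induced G (cycle_graph 3) \<longleftrightarrow> \<not> triangle_free (adj G)"
proof
  assume "has_induced G (cycle_graph 3)"
  then obtain f :: "nat \<Rightarrow> 'a" where f: "\<forall>i\<in>{0..<3}. \<forall>j\<in>{0..<3}. adj G (f i) (f j) \<longleftrightarrow> i \<noteq> j"
    unfolding has_induced_def verts_cycle_graph adj_cycle_graph_3 by auto
  have "adj G (f 0) (f 1)" "adj G (f 1) (f 2)" "adj G (f 0) (f 2)"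
    using f by simp_all
  then show "\<not> triangle_free (adj G)"
    unfolding triangle_free_def by blast
next
  assume "\<not> triangle_free (adj G)"
  then obtain x y z where xyz: "adj G x y" "adj G y z" "adj G x z"
    unfolding triangle_free_def by blast
  define f where "f i = (if i = 0 then x else if i = 1 then y else z)" for i :: nat
  have "adj G y x" "adj G z y" "adj G z x" "\<not> adj G x x" "\<not> adj G y y" "\<not> adj G z z"
    using xyz simple_graph_adj_commute[OF G] simple_graph_adjD(3)[OF G] by blast+
  moreover have "x \<noteq> y" "y \<noteq> z" "x \<noteq> z" "x \<in> verts G" "y \<in> verts G" "z \<in> verts G"
    using xyz simple_graph_adjD[OF G] by metis+
  moreover have "{0..<3} = {0, 1, 2 :: nat}"
    by auto
  ultimately show "has_induced G (cycle_graph 3)"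
    unfolding has_induced_def verts_cycle_graph adj_cycle_graph_3
    using xyz by (intro exI[of _ f]) (simp add: f_def)
qed

lemma has_induced_2K2_iff:
  fixes G :: "'a graph"
  assumes G: "simple_graph G"
  shows "has_induced G (disj_union (complete_graph 2) (complete_graph 2)) \<longleftrightarrow> \<not> two_K2_free (adj G)"
    (is "has_induced G ?H \<longleftrightarrow> _")
proof -
  have verts_H: "verts ?H = {Inl 0, Inl 1, Inr 0, Inr 1}"
    by (auto simp: verts_disj_union verts_complete_graph)
  show ?thesis
  proof
    assume "has_induced G ?H"
    then obtain f :: "nat + nat \<Rightarrow> 'a"
      where f: "\<forall>u\<in>verts ?H. \<forall>v\<in>verts ?H. adj G (f u) (f v) \<longleftrightarrow> adj ?H u v"
      unfolding has_induced_def by blast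
    then have "adj G (f (Inl 0)) (f (Inl 1))" "adj G (f (Inr 0)) (f (Inr 1))"
      "\<not> adj G (f (Inl 0)) (f (Inr 0))" "\<not> adj G (f (Inl 0)) (f (Inr 1))"
      "\<not> adj G (f (Inl 1)) (f (Inr 0))" "\<not> adj G (f (Inl 1)) (f (Inr 1))"
      unfolding verts_H by (simp_all add: adj_complete_graph)
    then show "\<not> two_K2_free (adj G)"
      unfolding two_K2_free_def by blast
  next
    assume "\<not> two_K2_free (adj G)"
    then obtain a b c d where edges: "adj G a b" "adj G c d"
      and non_edges: "\<not> adj G a c" "\<not> adj G a d" "\<not> adj G b c" "\<not> adj G b d"
      unfolding two_K2_free_def by blast
    define f where "f u = (case u of Inl i \<Rightarrow> if i = 0 then a else b | Inr i \<Rightarrow> if i = 0 then c else d)"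
      for u :: "nat + nat"
    have "adj G b a" "adj G d c" "\<not> adj G c a" "\<not> adj G d a" "\<not> adj G c b" "\<not> adj G d b"
      "\<not> adj G a a" "\<not> adj G b b" "\<not> adj G c c" "\<not> adj G d d"
      using edges non_edges simple_graph_adj_commute[OF G] simple_graph_adjD(3)[OF G] by blast+
    moreover have "a \<noteq> b" "c \<noteq> d" "a \<noteq> c" "a \<noteq> d" "b \<noteq> c" "b \<noteq> d"
      "a \<in> verts G" "b \<in> verts G" "c \<in> verts G" "d \<in> verts G"
      using edges non_edges G by (metis simple_graph_adjD simple_graph_adj_commute)+
    ultimately show "has_induced G ?H"
      unfolding has_induced_def verts_H
      using edges non_edges by (intro exI[of _ f]) (simp add: f_def adj_complete_graph)
  qed
qed

lemma has_induced_K1_P4_iff: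
  fixes G :: "'a graph"
  assumes G: "simple_graph G"
  shows "has_induced G (disj_union (complete_graph 1) (path_graph 4)) \<longleftrightarrow>
    \<not> K1_P4_free (verts G) (adj G)"
    (is "has_induced G ?H \<longleftrightarrow> _")
proof -
  have verts_H: "verts ?H = {Inl 0, Inr 0, Inr 1, Inr 2, Inr 3}"
    by (auto simp: verts_disj_union verts_complete_graph verts_path_graph)
  show ?thesis
  proof
    assume "has_induced G ?H"
    then obtain f :: "nat + nat \<Rightarrow> 'a" where "f ` verts ?H \<subseteq> verts G"
      and f: "\<forall>u\<in>verts ?H. \<forall>v\<in>verts ?H. adj G (f u) (f v) \<longleftrightarrow> adj ?H u v"
      unfolding has_induced_def by blast
    then have "induced_P4 (adj G) (f (Inr 0)) (f (Inr 1)) (f (Inr 2)) (f (Inr 3))"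
      "f (Inl 0) \<in> verts G"
      "\<not> adj G (f (Inl 0)) (f (Inr 0))" "\<not> adj G (f (Inl 0)) (f (Inr 1))"
      "\<not> adj G (f (Inl 0)) (f (Inr 2))" "\<not> adj G (f (Inl 0)) (f (Inr 3))"
      unfolding verts_H induced_P4_def by (simp_all add: adj_path_graph)
    then show "\<not> K1_P4_free (verts G) (adj G)"
      unfolding K1_P4_free_def by blast
  next
    assume "\<not> K1_P4_free (verts G) (adj G)"
    then obtain a b c d e where P4: "induced_P4 (adj G) a b c d" and "e \<in> verts G"
      and isolated: "\<not> adj G e a" "\<not> adj G e b" "\<not> adj G e c" "\<not> adj G e d"
      unfolding K1_P4_free_def by blast
    define f where "f u = (case u of Inl _ \<Rightarrow> e
        | Inr i \<Rightarrow> if i = 0 then a else if i = 1 then b else if i = 2 then c else d)"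
      for u :: "nat + nat"
    have edges: "adj G a b" "adj G b c" "adj G c d"
      and non_edges: "\<not> adj G a c" "\<not> adj G b d" "\<not> adj G a d"
      using P4 unfolding induced_P4_def by blast+
    have "adj G b a" "adj G c b" "adj G d c" "\<not> adj G c a" "\<not> adj G d b" "\<not> adj G d a"
      "\<not> adj G a e" "\<not> adj G b e" "\<not> adj G c e" "\<not> adj G d e"
      "\<not> adj G a a" "\<not> adj G b b" "\<not> adj G c c" "\<not> adj G d d" "\<not> adj G e e"
      using edges non_edges isolated simple_graph_adj_commute[OF G] simple_graph_adjD(3)[OF G]
      by blast+
    moreover have "a \<noteq> b" "b \<noteq> c" "c \<noteq> d" "a \<noteq> c" "b \<noteq> d" "a \<noteq> d"
      "e \<noteq> a" "e \<noteq> b" "e \<noteq> c" "e \<noteq> d"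
      "a \<in> verts G" "b \<in> verts G" "c \<in> verts G" "d \<in> verts G"
      using edges non_edges isolated G by (metis simple_graph_adjD simple_graph_adj_commute)+
    ultimately show "has_induced G ?H"
      unfolding has_induced_def verts_H
      using edges non_edges isolated \<open>e \<in> verts G\<close>
      by (intro exI[of _ f]) (simp add: f_def adj_path_graph adj_complete_graph)
  qed
qed

locale obstruction_free_graph =
  fixes V :: "'a set" and E :: "'a \<Rightarrow> 'a \<Rightarrow> bool"
  assumes commute: "E x y \<longleftrightarrow> E y x"
    and irrefl: "\<not> E x x"
    and adj_in_verts: "E x y \<Longrightarrow> x \<in> V"
    and triangle_free: "triangle_free E"
    and two_K2_free: "two_K2_free E"
    and K1_P4_free: "K1_P4_free V E"
begin

lemma no_triangle: "E x y \<Longrightarrow> E y z \<Longrightarrow> \<not> E x z"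
  using triangle_free unfolding triangle_free_def by blast

lemma no_2K2: "E a b \<Longrightarrow> E c d \<Longrightarrow> E a c \<or> E a d \<or> E b c \<or> E b d"
  using two_K2_free unfolding two_K2_free_def by blast

lemma no_K1_P4: "induced_P4 E a b c d \<Longrightarrow> e \<in> V \<Longrightarrow> E e a \<or> E e b \<or> E e c \<or> E e d"
  using K1_P4_free unfolding K1_P4_free_def by blast

end

locale obstruction_free_graph_with_P4 = obstruction_free_graph +
  fixes a b c d
  assumes P4: "induced_P4 E a b c d"
begin

lemma P4_edges: "E a b" "E b c" "E c d" "\<not> E a c" "\<not> E b d" "\<not> E a d"
  and P4_ends_in_verts: "a \<in> V" "d \<in> V"
  using P4 adj_in_verts commute unfolding induced_P4_def by blast+

definition colour :: "'a \<Rightarrow> nat" where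
  "colour x = (if E x a then if E x c then 1 else 4 else if E x d then 2 else if E x b then 0 else 3)"

text \<open>A trace of two consecutive path vertices closes a triangle, \<open>{a}\<close> (resp. \<open>{d}\<close>)
forms a \<open>2K\<^sub>2\<close> with \<open>c d\<close> (resp. \<open>a b\<close>), and the empty trace a \<open>K\<^sub>1 + P\<^sub>4\<close>.\<close>

lemma colour_cases:
  assumes "x \<in> V"
  obtains "colour x = 0" "\<not> E x a" "E x b" "\<not> E x c" "\<not> E x d"
    | "colour x = 1" "E x a" "\<not> E x b" "E x c" "\<not> E x d"
    | "colour x = 2" "\<not> E x a" "E x b" "\<not> E x c" "E x d"
    | "colour x = 3" "\<not> E x a" "\<not> E x b" "E x c" "\<not> E x d"
    | "colour x = 4" "E x a" "\<not> E x b" "\<not> E x c" "E x d"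
  using P4 no_triangle[of x a b] no_triangle[of x b c] no_triangle[of x c d]
    no_2K2[of x a c d] no_2K2[of a b d x] no_K1_P4[OF P4 assms]
  unfolding colour_def induced_P4_def by (auto simp: commute[of x])

lemma colour_less_5: "colour x < 5"
  unfolding colour_def by simp

lemma adj_P4_iff_C5:
  assumes "x \<in> V"
  shows "E x a \<longleftrightarrow> C5 (colour x) 0" "E x b \<longleftrightarrow> C5 (colour x) 1"
    "E x c \<longleftrightarrow> C5 (colour x) 2" "E x d \<longleftrightarrow> C5 (colour x) 3"
  by (rule colour_cases[OF assms]; simp add: C5_iff)+

lemma adj_if_colour_succ:
  assumes "x \<in> V" "y \<in> V" "colour y = Suc (colour x) mod 5"
  shows "E x y"
proof (rule ccontr)
  assume "\<not> E x y"
  have "colour x \<in> {0, 1, 2, 3, 4}"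
    using colour_less_5[of x] by auto
  then show False
  proof (elim insertE emptyE)
    assume "colour x = 0"
    with assms have "E x b" "\<not> E x a" "\<not> E x d" "E y a" "\<not> E y b" "\<not> E y d"
      by (simp_all add: adj_P4_iff_C5 C5_iff)
    with P4_edges \<open>\<not> E x y\<close> have "induced_P4 E x b a y"
      unfolding induced_P4_def using commute by blast
    from no_K1_P4[OF this P4_ends_in_verts(2)] show False
      using \<open>\<not> E x d\<close> \<open>\<not> E y d\<close> P4_edges commute by blast
  next
    assume "colour x = 1"
    with assms have "E x a" "\<not> E x d" "E y d" "\<not> E y a"
      by (simp_all add: adj_P4_iff_C5 C5_iff)
    with no_2K2[of x a y d] show False
      using P4_edges \<open>\<not> E x y\<close> commute by blast
  next
    assume "colour x = 2"
    with assms have "E x d" "\<not> E x c" "\<not> E x a" "E y c" "\<not> E y d" "\<not> E y a"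
      by (simp_all add: adj_P4_iff_C5 C5_iff)
    with P4_edges \<open>\<not> E x y\<close> have "induced_P4 E y c d x"
      unfolding induced_P4_def using commute by blast
    from no_K1_P4[OF this P4_ends_in_verts(1)] show False
      using \<open>\<not> E x a\<close> \<open>\<not> E y a\<close> P4_edges commute by blast
  next
    assume "colour x = 3"
    with assms have "E x c" "\<not> E x a" "E y a" "\<not> E y c"
      by (simp_all add: adj_P4_iff_C5 C5_iff)
    with no_2K2[of x c y a] show False
      using P4_edges \<open>\<not> E x y\<close> commute by blast
  next
    assume "colour x = 4"
    with assms have "E x d" "\<not> E x b" "E y b" "\<not> E y d"
      by (simp_all add: adj_P4_iff_C5 C5_iff)
    with no_2K2[of x d y b] show False
      using P4_edges \<open>\<not> E x y\<close> commute by blast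
  qed
qed

lemma not_adj_if_not_C5:
  assumes "x \<in> V" "y \<in> V" "\<not> C5 (colour x) (colour y)"
  shows "\<not> E x y"
proof
  assume "E x y"
  consider "colour x = 0" "colour y = 3" | "colour y = 0" "colour x = 3"
    | "\<exists>j\<in>{0, 1, 2, 3}. C5 (colour x) j \<and> C5 (colour y) j"
    using C5_common_neighbour[OF colour_less_5 colour_less_5 assms(3)] by auto
  then show False
  proof cases
    case 1
    with assms have "E x b" "\<not> E x a" "\<not> E x d" "E y c" "\<not> E y b" "\<not> E y a" "\<not> E y d"
      by (simp_all add: adj_P4_iff_C5 C5_iff)
    with P4_edges \<open>E x y\<close> have "induced_P4 E a b x y"
      unfolding induced_P4_def using commute by blast
    from no_K1_P4[OF this P4_ends_in_verts(2)] show False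
      using \<open>\<not> E x d\<close> \<open>\<not> E y d\<close> P4_edges commute by blast
  next
    case 2
    with assms have "E y b" "\<not> E y a" "\<not> E y d" "E x c" "\<not> E x b" "\<not> E x a" "\<not> E x d"
      by (simp_all add: adj_P4_iff_C5 C5_iff)
    with P4_edges \<open>E x y\<close> have "induced_P4 E a b y x"
      unfolding induced_P4_def using commute by blast
    from no_K1_P4[OF this P4_ends_in_verts(2)] show False
      using \<open>\<not> E x d\<close> \<open>\<not> E y d\<close> P4_edges commute by blast
  next
    case 3
    then obtain p where "E x p" "E y p"
      using adj_P4_iff_C5[OF assms(1)] adj_P4_iff_C5[OF assms(2)] by auto
    then show False
      using no_triangle[of x y p] \<open>E x y\<close> commute by blast
  qed
qed

lemma adj_iff_C5_colour:
  assumes "x \<in> V" "y \<in> V"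
  shows "E x y \<longleftrightarrow> C5 (colour x) (colour y)"
  using adj_if_colour_succ[OF assms] adj_if_colour_succ[OF assms(2,1)] not_adj_if_not_C5[OF assms]
    colour_less_5 commute unfolding C5_iff_Suc_mod by blast

end

context obstruction_free_graph
begin

lemma C5_colouring_if_P4_free:
  assumes "\<And>a b c d. \<not> induced_P4 E a b c d"
  shows "\<exists>\<phi>. (\<forall>x\<in>V. \<phi> x < 5) \<and> (\<forall>x\<in>V. \<forall>y\<in>V. E x y \<longleftrightarrow> C5 (\<phi> x) (\<phi> y))"
proof (cases "\<exists>u v. E u v")
  case False
  then show ?thesis
    by (intro exI[of _ "\<lambda>_. 0"]) (auto simp: C5_iff)
next
  case True
  then obtain u v where "E u v"
    by blast
  define \<phi> where "\<phi> x = (if E x u then 1 else if E x v then 0 else 3 :: nat)" for x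
  have no_P4: "E a c \<or> E b d \<or> E a d" if "E a b" "E b c" "E c d" for a b c d
    using assms[of a b c d] that unfolding induced_P4_def by blast
  have "E x y \<longleftrightarrow> C5 (\<phi> x) (\<phi> y)" for x y
    using no_triangle[of x u v] no_triangle[of y u v] no_triangle[of x y u] no_triangle[of x y v]
      no_2K2[of x y u v] no_P4[of x u v y] no_P4[of y u v x] no_P4[of x y u v] no_P4[of x y v u]
      no_P4[of y x u v] no_P4[of y x v u] irrefl[of x] \<open>E u v\<close>
    unfolding \<phi>_def by (auto simp: C5_iff commute)
  moreover have "\<phi> x < 5" for x
    by (simp add: \<phi>_def)
  ultimately show ?thesis
    by blast
qed

lemma C5_colouring_exists:
  "\<exists>\<phi>. (\<forall>x\<in>V. \<phi> x < 5) \<and> (\<forall>x\<in>V. \<forall>y\<in>V. E x y \<longleftrightarrow> C5 (\<phi> x) (\<phi> y))"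
proof (cases "\<exists>a b c d. induced_P4 E a b c d")
  case True
  then obtain a b c d where "induced_P4 E a b c d"
    by blast
  then interpret obstruction_free_graph_with_P4 V E a b c d
    by unfold_locales
  show ?thesis
    using colour_less_5 adj_iff_C5_colour by blast
next
  case False
  then show ?thesis
    using C5_colouring_if_P4_free by blast
qed

end

lemma obstruction_free_if_full_C5_colouring:
  assumes G: "simple_graph G" and "full_C5_colouring G \<phi>"
  shows "triangle_free (adj G) \<and> two_K2_free (adj G) \<and> K1_P4_free (verts G) (adj G)"
proof -
  have pullback: "adj G x y \<longleftrightarrow> C5 (\<phi> x) (\<phi> y)" if "x \<in> verts G" "y \<in> verts G" for x y
    using assms(2) that unfolding full_C5_colouring_def by blast
  have in_verts: "x \<in> verts G" "y \<in> verts G" if "adj G x y" for x y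
    using simple_graph_adjD[OF G that] by simp_all
  have "triangle_free (adj G)"
    unfolding triangle_free_def
  proof (intro allI impI)
    fix x y z
    assume xy: "adj G x y" and yz: "adj G y z"
    then have "x \<in> verts G" "y \<in> verts G" "z \<in> verts G"
      by (blast intro: in_verts)+
    with xy yz have "C5 (\<phi> x) (\<phi> y)" "C5 (\<phi> y) (\<phi> z)"
      by (simp_all add: pullback)
    then have "\<not> C5 (\<phi> x) (\<phi> z)"
      using triangle_free_C5 unfolding triangle_free_def by blast
    then show "\<not> adj G x z"
      using \<open>x \<in> verts G\<close> \<open>z \<in> verts G\<close> by (simp add: pullback)
  qed
  moreover have "two_K2_free (adj G)"
    unfolding two_K2_free_def
  proof (intro allI impI)
    fix a b c d
    assume ab: "adj G a b" and cd: "adj G c d"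
    then have in_G: "a \<in> verts G" "b \<in> verts G" "c \<in> verts G" "d \<in> verts G"
      by (blast intro: in_verts)+
    with ab cd have "C5 (\<phi> a) (\<phi> b)" "C5 (\<phi> c) (\<phi> d)"
      by (simp_all add: pullback)
    then have "C5 (\<phi> a) (\<phi> c) \<or> C5 (\<phi> a) (\<phi> d) \<or> C5 (\<phi> b) (\<phi> c) \<or> C5 (\<phi> b) (\<phi> d)"
      using two_K2_free_C5 unfolding two_K2_free_def by blast
    with in_G show "adj G a c \<or> adj G a d \<or> adj G b c \<or> adj G b d"
      by (simp add: pullback)
  qed
  moreover have "K1_P4_free (verts G) (adj G)"
    unfolding K1_P4_free_def
  proof (intro allI impI)
    fix a b c d e
    assume P4: "induced_P4 (adj G) a b c d" and "e \<in> verts G"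
    then have "a \<in> verts G" "b \<in> verts G" "c \<in> verts G" "d \<in> verts G"
      unfolding induced_P4_def by (blast intro: in_verts)+
    with P4 have "induced_P4 C5 (\<phi> a) (\<phi> b) (\<phi> c) (\<phi> d)"
      unfolding induced_P4_def by (simp add: pullback)
    moreover have "\<phi> e \<in> {0..<5}"
      using assms(2) \<open>e \<in> verts G\<close> unfolding full_C5_colouring_def verts_cycle_graph by blast
    ultimately show "adj G e a \<or> adj G e b \<or> adj G e c \<or> adj G e d"
      using K1_P4_free_C5 \<open>e \<in> verts G\<close> \<open>a \<in> verts G\<close> \<open>b \<in> verts G\<close> \<open>c \<in> verts G\<close> \<open>d \<in> verts G\<close>
      unfolding K1_P4_free_def by (simp add: pullback)
  qed
  ultimately show ?thesis
    by blast
qed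

theorem corollary3p11:
  fixes G :: "'a graph"
  assumes "simple_graph G"
  shows "(\<exists>\<phi>. full_C5_colouring G \<phi>) \<longleftrightarrow>
     \<not> has_induced G (cycle_graph 3)
   \<and> \<not> has_induced G (disj_union (complete_graph 1) (path_graph 4))
   \<and> \<not> has_induced G (disj_union (complete_graph 2) (complete_graph 2))"
proof -
  have "(\<exists>\<phi>. full_C5_colouring G \<phi>) \<longleftrightarrow>
      triangle_free (adj G) \<and> two_K2_free (adj G) \<and> K1_P4_free (verts G) (adj G)"
  proof
    assume "triangle_free (adj G) \<and> two_K2_free (adj G) \<and> K1_P4_free (verts G) (adj G)"
    then interpret obstruction_free_graph "verts G" "adj G"
      using assms by unfold_locales (auto simp: simple_graph_def)
    show "\<exists>\<phi>. full_C5_colouring G \<phi>"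
      using C5_colouring_exists unfolding full_C5_colouring_def verts_cycle_graph by auto
  qed (use obstruction_free_if_full_C5_colouring[OF assms] in blast)
  then show ?thesis
    using has_induced_cycle_graph_3_iff[OF assms] has_induced_2K2_iff[OF assms]
      has_induced_K1_P4_iff[OF assms] by blast
qed

end
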